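(* Let $a_\star=-\lambda(2)/2$ if $\theta^*>2$ and $a_\star=v$ if $\theta^*\le 2$. Let $\varepsilon>0$ and $t_j=e^{a_\star j-\varepsilon j^{1/2}}$ for $j\in\mathbb N$. Then $\lim_{j\to\infty}\mathcal K^{(j)}_{t_j}(2)=0$ almost surely.
   Context: Standing setup. Let $(P_k)_{k\in\mathbb N}$ be nonnegative random variables with an arbitrary joint law such that $\sum_{k\ge1}P_k=1$ a.s. and $\mathbb E\,\#\{k:P_k>0\}>1$. Let $\mathbb V=\bigcup_{n\ge0}\mathbb N^n$ be the set of finite words (root $\varnothing$; $|u|$ is the length of $u$; $uk$ is the word $u$ followed by $k$), and let $((P_k(u))_{k\in\mathbb N})_{u\in\mathbb V}$ be independent copies of $(P_k)_{k\in\mathbb N}$. Set $P(\varnothing)=1$ and $P(uk)=P(u)P_k(u)$. For $|u|=j$ let $I_u=[\sum_{|v|=j,\,v\prec u}P(v),\ \sum_{|v|=j,\,v\preceq u}P(v))$, where $\prec$ is the lexicographic order on $\mathbb N^j$. Let $U_1,U_2,\dots$ be i.i.d. uniform on $[0,1]$, independent of the weights (ball $i$ falls into every box $u$ with $U_i\in I_u$). For $j,n,k\in\mathbb N$ let $K_n^{(j)}(k)=\#\{u:|u|=j,\ \#\{i\le n:U_i\in I_u\}\ge k\}$, and $K_n^{(j)}=K_n^{(j)}(1)$. Poissonization: let $(N_t)_{t\ge0}$ be a unit-rate Poisson process independent of the weights and of $(U_i)$; set $\mathcal K_t^{(j)}(k)=K_{N_t}^{(j)}(k)$ (with $K_0^{(j)}(k)=0$)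 and $\mathcal K_t^{(j)}=\mathcal K_t^{(j)}(1)$. Branching random walk: $V(u)=-\log P(u)$ ($V(u)=\infty$ if $P(u)=0$; sums over $|u|=j$ ignore such $u$). Nonlattice assumption: for all $a>0$, $b\in\mathbb R$, $\mathbb P(V(u)\in a\mathbb Z+b\text{ for all }|u|=1)<1$. Let $\lambda(\theta)=\log\mathbb E\sum_{|u|=1}e^{-\theta V(u)}\in(-\infty,\infty]$ and $\underline\theta=\inf\{\theta:\lambda(\theta)<\infty\}$ (so $\lambda(1)=0$, $\underline\theta\le 1$, and $\lambda$ is strictly convex and decreasing on its domain). It is assumed that there exists $\theta^*$ with $\theta^*\lambda'(\theta^* )-\lambda(\theta^* )=0$ (then $\theta^*>1$); put $v=-\lambda(\theta^* )/\theta^*$. *)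

theory Defs
  imports "HOL-Probability.Probability"
begin

text \<open>Sources of randomness: the weight sequence attached to each word (box) u,
  the ball positions U i, and the exponential inter-arrival times E i of the
  unit-rate Poisson process. All are encoded as random elements of the
  space nat => real (ball positions / arrival times as constant sequences),
  so that their joint independence can be stated with a single indep_vars.\<close>

datatype src = Wt "nat list" | Ball nat | Arr nat

definition src_var ::
  "(nat list \<Rightarrow> 'a \<Rightarrow> nat \<Rightarrow> real) \<Rightarrow> (nat \<Rightarrow> 'a \<Rightarrow> real) \<Rightarrow> (nat \<Rightarrow> 'a \<Rightarrow> real)
    \<Rightarrow> src \<Rightarrow> 'a \<Rightarrow> nat \<Rightarrow> real" where
  "src_var W U E s \<omega> = (case s of Wt u \<Rightarrow> W u \<omega> | Ball i \<Rightarrow> (\<lambda>_. U i \<omega>) | Arr i \<Rightarrow> (\<lambda>_. E i \<omega>))"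

text \<open>P(u): product of the weights along the path to u; W v \<omega> k is P_k(v).\<close>
definition Pw :: "(nat list \<Rightarrow> 'a \<Rightarrow> nat \<Rightarrow> real) \<Rightarrow> nat list \<Rightarrow> 'a \<Rightarrow> real" where
  "Pw W u \<omega> = (\<Prod>i<length u. W (take i u) \<omega> (u ! i))"

definition box_left :: "(nat list \<Rightarrow> 'a \<Rightarrow> nat \<Rightarrow> real) \<Rightarrow> nat list \<Rightarrow> 'a \<Rightarrow> real" where
  "box_left W u \<omega> = (\<Sum>\<^sub>\<infinity> v\<in>{v. length v = length u \<and> ord_class.lexordp v u}. Pw W v \<omega>)"

definition box :: "(nat list \<Rightarrow> 'a \<Rightarrow> nat \<Rightarrow> real) \<Rightarrow> nat list \<Rightarrow> 'a \<Rightarrow> real set" where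
  "box W u \<omega> = {box_left W u \<omega> ..< box_left W u \<omega> + Pw W u \<omega>}"

definition nballs :: "(nat list \<Rightarrow> 'a \<Rightarrow> nat \<Rightarrow> real) \<Rightarrow> (nat \<Rightarrow> 'a \<Rightarrow> real) \<Rightarrow> nat \<Rightarrow> nat list \<Rightarrow> 'a \<Rightarrow> nat" where
  "nballs W U n u \<omega> = card {i\<in>{1..n}. U i \<omega> \<in> box W u \<omega>}"

definition Kn :: "(nat list \<Rightarrow> 'a \<Rightarrow> nat \<Rightarrow> real) \<Rightarrow> (nat \<Rightarrow> 'a \<Rightarrow> real) \<Rightarrow> nat \<Rightarrow> nat \<Rightarrow> nat \<Rightarrow> 'a \<Rightarrow> nat" where
  "Kn W U j n k \<omega> = card {u. length u = j \<and> k \<le> nballs W U n u \<omega>}"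

definition Npois :: "(nat \<Rightarrow> 'a \<Rightarrow> real) \<Rightarrow> real \<Rightarrow> 'a \<Rightarrow> nat" where
  "Npois E t \<omega> = card {n. 1 \<le> n \<and> (\<Sum>i<n. E i \<omega>) \<le> t}"

definition Kpois :: "(nat list \<Rightarrow> 'a \<Rightarrow> nat \<Rightarrow> real) \<Rightarrow> (nat \<Rightarrow> 'a \<Rightarrow> real) \<Rightarrow> (nat \<Rightarrow> 'a \<Rightarrow> real)
    \<Rightarrow> nat \<Rightarrow> real \<Rightarrow> nat \<Rightarrow> 'a \<Rightarrow> nat" where
  "Kpois W U E j t k \<omega> = Kn W U j (Npois E t \<omega>) k \<omega>"

text \<open>E sum_{|u|=1} exp(-theta V(u)) for a law Q of (P_k)_k (terms with P_k = 0 ignored),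
  and lambda(theta) = log of it (only meaningful where finite).\<close>
definition Lsum :: "(nat \<Rightarrow> real) measure \<Rightarrow> real \<Rightarrow> ennreal" where
  "Lsum Q \<theta> = (\<integral>\<^sup>+ x. (\<Sum>k. ennreal (if 0 < x k then x k powr \<theta> else 0)) \<partial>Q)"

definition lam :: "(nat \<Rightarrow> real) measure \<Rightarrow> real \<Rightarrow> real" where
  "lam Q \<theta> = ln (enn2real (Lsum Q \<theta>))"

end

theory Submission
  imports Defs "HOL-Real_Asymp.Real_Asymp"
begin

text \<open>Fix \<theta> in (0, 2], put a = -\<lambda>(\<theta>)/\<theta> and t_j = exp (a j - \<epsilon> sqrt j); the theorem is the
  case \<theta> = min \<theta>* 2. If a \<le> 0, a box with two balls needs two arrivals before t_j, which has
  probability at most t_j^2 \<le> exp (-2 \<epsilon> sqrt j). If a > 0, let m_j be about e^2 t_j + j. Having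
  m_j arrivals before t_j is super-exponentially unlikely; otherwise two of the first m_j balls
  share a box u of generation j. For a fixed u this has probability at most 2 m^\<theta> E P(u)^\<theta>:
  by Markov's inequality if P(u) > 1/m, and since m^2 P(u)^2 \<le> (m P(u))^\<theta> otherwise. Summing
  over the boxes gives 2 m_j^\<theta> exp (-a \<theta> j) = O(exp (-\<theta> \<epsilon> sqrt j)), and Borel-Cantelli
  concludes.\<close>

lemma power_div_fact_le_exp:
  fixes x :: real
  assumes "0 \<le> x"
  shows "x ^ n / fact n \<le> exp x"
proof -
  have exp_sums: "(\<lambda>k. x ^ k / fact k) sums exp x"
    using exp_converges[of x] by (simp add: divide_inverse mult.commute)
  have "sum (\<lambda>k. x ^ k / fact k) {n} \<le> suminf (\<lambda>k. x ^ k / fact k)"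
    by (rule sum_le_suminf) (use exp_sums assms in \<open>auto simp: sums_iff\<close>)
  thus ?thesis using exp_sums by (simp add: sums_iff)
qed

lemma power_div_fact_pred_le_exp:
  fixes t :: real
  assumes m: "1 \<le> m" and t: "0 \<le> t" and tm: "exp 2 * t \<le> real m"
  shows "t ^ m / fact (m - 1) \<le> 2 * exp (- real m / 2)"
proof -
  have m_pos: "0 < real m" using m by simp
  have "t / real m \<le> exp (-2)" using tm m_pos by (simp add: field_simps exp_minus)
  hence "(t / real m) ^ m \<le> exp (-2) ^ m" using t m_pos by (intro power_mono) auto
  also have "\<dots> = exp (- 2 * real m)" by (simp add: exp_of_nat_mult[symmetric] mult.commute)
  finally have ratio: "(t / real m) ^ m \<le> exp (- 2 * real m)" .
  have "t ^ m / fact m = (t / real m) ^ m * (real m ^ m / fact m)"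
    using m_pos by (simp add: power_divide)
  also have "\<dots> \<le> exp (- 2 * real m) * exp (real m)"
    by (intro mult_mono ratio power_div_fact_le_exp) (use t in auto)
  finally have fact_bound: "t ^ m / fact m \<le> exp (- real m)" by (simp add: exp_add[symmetric])
  have "t ^ m / fact (m - 1) = real m * (t ^ m / fact m)"
    using m by (cases m) auto
  also have "\<dots> \<le> real m * exp (- real m)" using fact_bound m_pos by (intro mult_left_mono) auto
  also have "\<dots> \<le> (2 * exp (real m / 2)) * exp (- real m)"
  proof (rule mult_right_mono)
    have "1 + real m / 2 \<le> exp (real m / 2)" by (rule exp_ge_add_one_self)
    thus "real m \<le> 2 * exp (real m / 2)" by linarith
  qed simp
  also have "\<dots> = 2 * exp (- real m / 2)"
    by (simp add: mult.assoc exp_add[symmetric])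
  finally show ?thesis .
qed

lemma summable_power_div_fact_pred:
  fixes t :: "nat \<Rightarrow> real" and m :: "nat \<Rightarrow> nat"
  assumes t: "\<And>j. 0 \<le> t j" and tm: "\<And>j. exp 2 * t j \<le> real (m j)"
    and jm: "\<And>j. j \<le> m j" and m: "\<And>j. 1 \<le> m j"
  shows "summable (\<lambda>j. t j ^ m j / fact (m j - 1))"
proof (rule summable_comparison_test)
  show "summable (\<lambda>j. 2 * exp (-1/2::real) ^ j)"
    by (intro summable_mult summable_geometric) simp
  show "\<exists>N. \<forall>j\<ge>N. norm (t j ^ m j / fact (m j - 1)) \<le> 2 * exp (-1/2) ^ j"
  proof (intro exI allI impI)
    fix j :: nat
    have "norm (t j ^ m j / fact (m j - 1)) \<le> 2 * exp (- real (m j) / 2)"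
      using power_div_fact_pred_le_exp[OF m t tm] t[of j] by simp
    also have "\<dots> \<le> 2 * exp (- real j / 2)" using jm[of j] by simp
    also have "\<dots> = 2 * exp (-1/2) ^ j" by (simp add: exp_of_nat_mult[symmetric] mult.commute)
    finally show "norm (t j ^ m j / fact (m j - 1)) \<le> 2 * exp (-1/2) ^ j" .
  qed
qed

lemma summable_exp_neg_sqrt:
  fixes c :: real
  assumes "0 < c"
  shows "summable (\<lambda>j::nat. exp (- c * sqrt (real j)))"
proof (rule summable_comparison_test_ev)
  show "summable (\<lambda>j::nat. real j powr (-2))" by (simp add: summable_real_powr_iff)
  have "\<forall>\<^sub>F j in sequentially. exp (- c * sqrt (real j)) \<le> real j powr (-2)"
    using assms by real_asymp
  thus "\<forall>\<^sub>F j in sequentially. norm (exp (- c * sqrt (real j))) \<le> real j powr (-2)" by simp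
qed

lemma mult_square_le_powr:
  fixes m p \<theta> :: real
  assumes "0 < m" "0 \<le> p" "p \<le> 1 / m" "0 < \<theta>" "\<theta> \<le> 2"
  shows "m * m * p ^ 2 \<le> m powr \<theta> * p powr \<theta>"
proof -
  have "m * m * p ^ 2 = (m * p) powr 2"
    using assms by (simp add: powr_numeral power2_eq_square)
  also have "\<dots> \<le> (m * p) powr \<theta>"
    using assms by (intro powr_mono') (auto simp: field_simps)
  also have "\<dots> = m powr \<theta> * p powr \<theta>" using assms by (simp add: powr_mult)
  finally show ?thesis .
qed

lemma nn_integral_count_space_lists_prod:
  fixes f :: "'b::countable \<Rightarrow> ennreal"
  shows "(\<integral>\<^sup>+u. (\<Prod>i<j. f (u ! i)) \<partial>count_space {u. length u = j})
    = (\<integral>\<^sup>+k. f k \<partial>count_space UNIV) ^ j"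
proof (induction j)
  case 0
  have "{u::'b list. length u = 0} = {[]}" by auto
  thus ?case by (simp add: nn_integral_count_space_finite)
next
  case (Suc j)
  let ?L = "{u::'b list. length u = j}"
  let ?cons = "\<lambda>p::'b \<times> 'b list. fst p # snd p"
  have bij: "bij_betw ?cons (UNIV \<times> ?L) {u. length u = Suc j}"
    by (rule bij_betwI[where g="\<lambda>u. (hd u, tl u)"]) (auto simp: length_Suc_conv)
  have L: "countable ?L" by simp
  interpret L: sigma_finite_measure "count_space ?L"
    by (rule sigma_finite_measure_count_space_countable) simp
  have "(\<integral>\<^sup>+u. (\<Prod>i<Suc j. f (u ! i)) \<partial>count_space {u. length u = Suc j})
      = (\<integral>\<^sup>+p. (\<Prod>i<Suc j. f (?cons p ! i)) \<partial>(count_space UNIV \<Otimes>\<^sub>M count_space ?L))"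
    by (simp only: nn_integral_bij_count_space[OF bij, symmetric]
        pair_measure_countable[OF countableI_type L])
  also have "\<dots> = (\<integral>\<^sup>+k. \<integral>\<^sup>+v. (\<Prod>i<Suc j. f (?cons (k, v) ! i)) \<partial>count_space ?L \<partial>count_space UNIV)"
    by (rule L.nn_integral_fst[symmetric])
      (simp add: pair_measure_countable[OF countableI_type L] measurable_count_space_eq1)
  also have "\<dots> = (\<integral>\<^sup>+k. f k * \<integral>\<^sup>+v. (\<Prod>i<j. f (v ! i)) \<partial>count_space ?L \<partial>count_space UNIV)"
    by (simp only: prod.lessThan_Suc_shift fst_conv snd_conv nth_Cons_0 nth_Cons_Suc)
      (simp add: nn_integral_cmult)
  also have "\<dots> = (\<integral>\<^sup>+k. f k \<partial>count_space UNIV) ^ Suc j"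
    unfolding Suc.IH power_Suc by (rule nn_integral_multc) simp
  finally show ?case .
qed

lemma emeasure_UN_le_nn_integral_count_space:
  assumes I: "countable I" and C: "\<And>i. i \<in> I \<Longrightarrow> C i \<in> sets N"
  shows "emeasure N (\<Union>i\<in>I. C i) \<le> (\<integral>\<^sup>+i. emeasure N (C i) \<partial>count_space I)"
proof -
  have "emeasure N (\<Union>i\<in>I. C i) = (\<integral>\<^sup>+\<omega>. indicator (\<Union>i\<in>I. C i) \<omega> \<partial>N)"
    using sets.countable_UN''[OF I C] by simp
  also have "\<dots> \<le> (\<integral>\<^sup>+\<omega>. (\<integral>\<^sup>+i. indicator (C i) \<omega> \<partial>count_space I) \<partial>N)"
  proof (rule nn_integral_mono)
    fix \<omega>
    show "indicator (\<Union>i\<in>I. C i) \<omega> \<le> (\<integral>\<^sup>+i. indicator (C i) \<omega> \<partial>count_space I)"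
    proof (cases "\<omega> \<in> (\<Union>i\<in>I. C i)")
      case True
      then obtain i0 where i0: "i0 \<in> I" "\<omega> \<in> C i0" by auto
      have "1 = (\<integral>\<^sup>+i. indicator (C i) \<omega> * indicator {i0} i \<partial>count_space I)"
        using i0 by (subst nn_integral_indicator_singleton) auto
      also have "\<dots> \<le> (\<integral>\<^sup>+i. indicator (C i) \<omega> \<partial>count_space I)"
        by (intro nn_integral_mono) (auto simp: indicator_def)
      finally show ?thesis using True by simp
    qed simp
  qed
  also have "\<dots> = (\<integral>\<^sup>+i. emeasure N (C i) \<partial>count_space I)"
    using C by (simp add: nn_integral_count_space_nn_integral[OF I] cong: nn_integral_cong_simp)
  finally show ?thesis .
qed

lemma infsum_nonneg_eq_enn2real_nn_integral:
  fixes f :: "'b \<Rightarrow> real"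
  assumes nonneg: "\<And>x. x \<in> A \<Longrightarrow> 0 \<le> f x"
  shows "infsum f A = enn2real (\<integral>\<^sup>+x. ennreal (f x) \<partial>count_space A)"
proof (cases "f summable_on A")
  case True
  hence abs: "Infinite_Set_Sum.abs_summable_on f A"
    using abs_summable_equivalent summable_on_iff_abs_summable_on_real by blast
  have "(\<integral>\<^sup>+x. ennreal (f x) \<partial>count_space A) = ennreal (infsetsum f A)"
    by (rule nn_integral_conv_infsetsum[OF abs nonneg])
  moreover have "0 \<le> infsetsum f A" using nonneg by (simp add: infsetsum_nonneg)
  ultimately show ?thesis using infsetsum_infsum[OF abs] by simp
next
  case False
  have "(\<integral>\<^sup>+x. ennreal (f x) \<partial>count_space A) = \<infinity>"
  proof (rule ccontr)
    assume "(\<integral>\<^sup>+x. ennreal (f x) \<partial>count_space A) \<noteq> \<infinity>"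
    hence "integrable (count_space A) f"
      using nonneg by (intro integrableI_nonneg) (auto simp: AE_count_space top.not_eq_extremum)
    hence "Infinite_Set_Sum.abs_summable_on f A" by (simp add: abs_summable_on_def)
    hence "f summable_on A"
      using abs_summable_equivalent summable_on_iff_abs_summable_on_real by blast
    with False show False by simp
  qed
  with False show ?thesis by (simp add: infsum_not_exists)
qed

lemma borel_measurable_nn_integral_count_space:
  assumes A: "countable A" and f: "\<And>v. v \<in> A \<Longrightarrow> f v \<in> borel_measurable N"
  shows "(\<lambda>y. \<integral>\<^sup>+v. f v y \<partial>count_space A) \<in> borel_measurable N"
proof -
  interpret sigma_finite_measure "count_space A"
    using A by (rule sigma_finite_measure_count_space_countable)
  have "(\<lambda>(v, y). f v y) \<in> borel_measurable (count_space A \<Otimes>\<^sub>M N)"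
    using A by (rule measurable_pair_measure_countable1) (simp add: f)
  hence "(\<lambda>(y, v). f v y) \<in> borel_measurable (N \<Otimes>\<^sub>M count_space A)"
    by (subst measurable_pair_swap_iff) simp
  thus ?thesis by (rule borel_measurable_nn_integral)
qed

lemma (in prob_space) emeasure_indep_var_pair:
  assumes indep: "indep_var MA A MB B" and T: "T \<in> sets (MA \<Otimes>\<^sub>M MB)"
  shows "emeasure M {\<omega>\<in>space M. (A \<omega>, B \<omega>) \<in> T}
    = (\<integral>\<^sup>+a. emeasure (distr M MB B) (Pair a -` T) \<partial>distr M MA A)"
proof -
  have [measurable]: "A \<in> measurable M MA" "B \<in> measurable M MB"
    using indep by (auto dest: indep_var_rv1 indep_var_rv2)
  interpret B: prob_space "distr M MB B" by (rule prob_space_distr) simp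
  have "{\<omega>\<in>space M. (A \<omega>, B \<omega>) \<in> T} = (\<lambda>\<omega>. (A \<omega>, B \<omega>)) -` T \<inter> space M" by auto
  hence "emeasure M {\<omega>\<in>space M. (A \<omega>, B \<omega>) \<in> T}
      = emeasure (distr M (MA \<Otimes>\<^sub>M MB) (\<lambda>\<omega>. (A \<omega>, B \<omega>))) T"
    using T by (simp add: emeasure_distr)
  also have "\<dots> = emeasure (distr M MA A \<Otimes>\<^sub>M distr M MB B) T"
    using indep by (simp add: indep_var_distribution_eq)
  also have "\<dots> = (\<integral>\<^sup>+a. emeasure (distr M MB B) (Pair a -` T) \<partial>distr M MA A)"
    by (rule B.emeasure_pair_measure_alt) (use T in simp)
  finally show ?thesis .
qed

lemma summable_powr_mult_exp:
  fixes a \<epsilon> \<theta> C :: real and m :: "nat \<Rightarrow> nat"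
  assumes \<epsilon>: "0 < \<epsilon>" and \<theta>: "0 < \<theta>" and C: "0 \<le> C"
    and m: "\<forall>\<^sub>F j in sequentially. real (m j) \<le> C * exp (a * real j - \<epsilon> * sqrt (real j))"
  shows "summable (\<lambda>j. real (m j) powr \<theta> * exp (- a * \<theta>) ^ j)"
proof (rule summable_comparison_test_ev)
  show "summable (\<lambda>j. C powr \<theta> * exp (- (\<theta> * \<epsilon>) * sqrt (real j)))"
    by (intro summable_mult summable_exp_neg_sqrt) (use \<theta> \<epsilon> in simp)
  show "\<forall>\<^sub>F j in sequentially. norm (real (m j) powr \<theta> * exp (- a * \<theta>) ^ j)
      \<le> C powr \<theta> * exp (- (\<theta> * \<epsilon>) * sqrt (real j))"
    using m
  proof eventually_elim
    case (elim j)
    let ?t = "exp (a * real j - \<epsilon> * sqrt (real j))"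
    have "real (m j) powr \<theta> \<le> (C * ?t) powr \<theta>"
      using elim \<theta> by (intro powr_mono2) auto
    also have "\<dots> = C powr \<theta> * ?t powr \<theta>" using C by (simp add: powr_mult)
    finally have "real (m j) powr \<theta> * exp (- a * \<theta>) ^ j \<le> C powr \<theta> * (?t powr \<theta> * exp (- a * \<theta>) ^ j)"
      by (simp add: mult_right_mono mult.assoc)
    also have "?t powr \<theta> * exp (- a * \<theta>) ^ j = exp (- (\<theta> * \<epsilon>) * sqrt (real j))"
      by (simp add: powr_def exp_of_nat_mult[symmetric] exp_add[symmetric] algebra_simps)
    finally show ?case by simp
  qed
qed

text \<open>m_j is large enough for m_j arrivals before t_j to be super-exponentially unlikely, and still
  O(t_j) because t_j grows exponentially.\<close>

lemma summable_collision_bound: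
  fixes a \<epsilon> \<theta> :: real
  assumes a: "0 < a" and \<epsilon>: "0 < \<epsilon>" and \<theta>: "0 < \<theta>"
  defines "t \<equiv> \<lambda>j::nat. exp (a * real j - \<epsilon> * sqrt (real j))"
  defines "m \<equiv> \<lambda>j::nat. nat \<lceil>exp 2 * t j\<rceil> + j + 2"
  shows "summable (\<lambda>j. t j ^ m j / fact (m j - 1) + 2 * (real (m j) powr \<theta> * exp (- a * \<theta>) ^ j))"
proof (intro summable_add summable_mult)
  have t_pos: "0 < t j" for j by (simp add: t_def)
  have m_ge: "exp 2 * t j \<le> real (m j)" "j \<le> m j" "1 \<le> m j" for j
    unfolding m_def by linarith+
  show "summable (\<lambda>j. t j ^ m j / fact (m j - 1))"
    by (rule summable_power_div_fact_pred) (use t_pos m_ge in \<open>auto simp: less_imp_le\<close>)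
  have "\<forall>\<^sub>F j in sequentially. real j + 3 \<le> t j"
    unfolding t_def using a \<epsilon> by real_asymp
  hence m_le: "\<forall>\<^sub>F j in sequentially. real (m j) \<le> (exp 2 + 1) * t j"
  proof eventually_elim
    case (elim j)
    have "real (m j) \<le> exp 2 * t j + 1 + real j + 2"
      unfolding m_def using t_pos[of j] by (simp add: of_nat_nat) linarith
    with elim show ?case by (simp add: algebra_simps)
  qed
  show "summable (\<lambda>j. real (m j) powr \<theta> * exp (- a * \<theta>) ^ j)"
    by (rule summable_powr_mult_exp[OF \<epsilon> \<theta> _ m_le[unfolded t_def]]) simp
qed

lemma Kpois_two_nonzero_cases:
  assumes E_nonneg: "\<And>i. 0 \<le> E i \<omega>" and m: "1 \<le> m"
    and K: "Kpois W U E j t 2 \<omega> \<noteq> 0"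
  shows "(\<Sum>i<m. E i \<omega>) \<le> t \<or>
    (\<exists>u i k. length u = j \<and> i \<in> {1..m-1} \<and> k \<in> {1..m-1} \<and> i \<noteq> k
       \<and> U i \<omega> \<in> box W u \<omega> \<and> U k \<omega> \<in> box W u \<omega>)"
proof -
  define N where "N = Npois E t \<omega>"
  from K have "{u. length u = j \<and> 2 \<le> nballs W U N u \<omega>} \<noteq> {}"
    unfolding Kpois_def Kn_def N_def by (metis card.empty)
  then obtain u where u: "length u = j" "2 \<le> nballs W U N u \<omega>" by auto
  let ?A = "{i\<in>{1..N}. U i \<omega> \<in> box W u \<omega>}"
  have "\<not> card ?A \<le> Suc 0" using u(2) by (simp add: nballs_def)
  then obtain i k where ik: "i \<in> ?A" "k \<in> ?A" "i \<noteq> k"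
    using card_le_Suc0_iff_eq[of ?A] by auto
  show ?thesis
  proof (cases "m \<le> N")
    case True
    let ?F = "{n. 1 \<le> n \<and> (\<Sum>i<n. E i \<omega>) \<le> t}"
    have card_F: "card ?F = N" by (simp add: N_def Npois_def)
    have "\<not> ?F \<subseteq> {1..m-1}"
    proof
      assume "?F \<subseteq> {1..m-1}"
      hence "card ?F \<le> m - 1" using card_mono[of "{1..m-1}" ?F] by auto
      with card_F True m show False by linarith
    qed
    then obtain n where n: "n \<in> ?F" "m \<le> n" by force
    have "(\<Sum>i<m. E i \<omega>) \<le> (\<Sum>i<n. E i \<omega>)"
      by (rule sum_mono2) (use n E_nonneg in auto)
    with n show ?thesis by auto
  next
    case False
    with ik u show ?thesis by fastforce
  qed
qed

abbreviation seq_borel :: "(nat \<Rightarrow> real) measure" where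
  "seq_borel \<equiv> PiM UNIV (\<lambda>_. borel)"

abbreviation weights_space :: "(src \<Rightarrow> nat \<Rightarrow> real) measure" where
  "weights_space \<equiv> PiM (range Wt) (\<lambda>_. seq_borel)"

text \<open>Pw, box_left and box as functions of the weights alone, so that they are measurable on
  weights_space; the max 0 only matters on the null set of negative weights.\<close>

definition path_weight :: "nat list \<Rightarrow> (src \<Rightarrow> nat \<Rightarrow> real) \<Rightarrow> real" where
  "path_weight u y = (\<Prod>i<length u. max 0 (y (Wt (take i u)) (u ! i)))"

definition box_start :: "nat list \<Rightarrow> (src \<Rightarrow> nat \<Rightarrow> real) \<Rightarrow> real" where
  "box_start u y = infsum (\<lambda>v. path_weight v y) {v. length v = length u \<and> ord_class.lexordp v u}"

definition weight_box :: "nat list \<Rightarrow> (src \<Rightarrow> nat \<Rightarrow> real) \<Rightarrow> real set" where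
  "weight_box u y = {box_start u y ..< box_start u y + path_weight u y}"

lemma path_weight_nonneg: "0 \<le> path_weight u y"
  unfolding path_weight_def by (intro prod_nonneg) auto

lemma measurable_weight_component[measurable]:
  "(\<lambda>y. y (Wt v) k) \<in> borel_measurable weights_space"
proof -
  have "(\<lambda>y. y (Wt v)) \<in> measurable weights_space seq_borel"
    by (rule measurable_component_singleton) simp
  from measurable_compose[OF this measurable_component_singleton[of k UNIV "\<lambda>_. borel"]]
  show ?thesis by simp
qed

lemma measurable_path_weight[measurable]: "path_weight u \<in> borel_measurable weights_space"
  unfolding path_weight_def by measurable

lemma measurable_box_start[measurable]: "box_start u \<in> borel_measurable weights_space"
proof -
  let ?V = "{v. length v = length u \<and> ord_class.lexordp v u}"
  have "box_start u = (\<lambda>y. enn2real (\<integral>\<^sup>+v. ennreal (path_weight v y) \<partial>count_space ?V))"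
    unfolding box_start_def by (intro ext infsum_nonneg_eq_enn2real_nn_integral path_weight_nonneg)
  also have "\<dots> \<in> borel_measurable weights_space"
    by (intro borel_measurable_enn2real borel_measurable_nn_integral_count_space) auto
  finally show ?thesis .
qed

abbreviation ball_pair_space :: "nat \<Rightarrow> nat \<Rightarrow> (src \<Rightarrow> nat \<Rightarrow> real) measure" where
  "ball_pair_space i k \<equiv> PiM {Ball i, Ball k} (\<lambda>_. seq_borel)"

lemma measurable_ball_pair_component[measurable]:
  "(\<lambda>z. z (Ball i) 0) \<in> borel_measurable (ball_pair_space i k)"
  "(\<lambda>z. z (Ball k) 0) \<in> borel_measurable (ball_pair_space i k)"
proof -
  have "(\<lambda>z. z s) \<in> measurable (ball_pair_space i k) seq_borel" if "s \<in> {Ball i, Ball k}" for s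
    by (rule measurable_component_singleton) (use that in auto)
  from measurable_compose[OF this measurable_component_singleton[of 0 UNIV "\<lambda>_. borel"]]
  show "(\<lambda>z. z (Ball i) 0) \<in> borel_measurable (ball_pair_space i k)"
    "(\<lambda>z. z (Ball k) 0) \<in> borel_measurable (ball_pair_space i k)" by auto
qed

text \<open>lam Q \<theta> = ln 0 = 0 whenever Lsum Q \<theta> is 0 or \<infinity>.\<close>

lemma Lsum_eq_exp_lam:
  assumes "lam Q \<theta> \<noteq> 0"
  shows "Lsum Q \<theta> = ennreal (exp (lam Q \<theta>))"
proof -
  have "enn2real (Lsum Q \<theta>) \<noteq> 0" using assms by (auto simp: lam_def)
  hence "0 < enn2real (Lsum Q \<theta>)" "Lsum Q \<theta> = ennreal (enn2real (Lsum Q \<theta>))"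
    by (cases "Lsum Q \<theta>"; simp)+
  thus ?thesis by (simp add: lam_def)
qed

locale balls_in_boxes = prob_space M for M :: "'a measure" +
  fixes Q :: "(nat \<Rightarrow> real) measure"
    and W :: "nat list \<Rightarrow> 'a \<Rightarrow> nat \<Rightarrow> real"
    and U :: "nat \<Rightarrow> 'a \<Rightarrow> real"
    and E :: "nat \<Rightarrow> 'a \<Rightarrow> real"
  assumes indep: "indep_vars (\<lambda>_. seq_borel) (src_var W U E) UNIV"
    and law: "\<And>u. distr M seq_borel (W u) = Q"
    and weights_nonneg: "AE x in Q. \<forall>k. 0 \<le> x k"
    and unif: "\<And>i. distributed M lborel (U i) (\<lambda>x. indicator {0..1::real} x)"
    and expo: "\<And>i. distributed M lborel (E i) (exponential_density 1)"
begin

abbreviation source :: "src \<Rightarrow> 'a \<Rightarrow> nat \<Rightarrow> real" where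
  "source \<equiv> src_var W U E"

lemma source_Wt[simp]: "source (Wt v) \<omega> = W v \<omega>"
  and source_Ball[simp]: "source (Ball i) \<omega> k = U i \<omega>"
  and source_Arr[simp]: "source (Arr i) \<omega> k = E i \<omega>"
  by (simp_all add: src_var_def fun_eq_iff)

lemma measurable_source[measurable]: "source s \<in> measurable M seq_borel"
  using indep unfolding indep_vars_def by auto

lemma measurable_W[measurable]: "W u \<in> measurable M seq_borel"
  using measurable_source[of "Wt u"] by (simp add: src_var_def[abs_def])

lemma measurable_E[measurable]: "E i \<in> borel_measurable M"
  using distributed_measurable[OF expo[of i]] by simp

lemma measurable_U[measurable]: "U i \<in> borel_measurable M"
  using distributed_measurable[OF unif[of i]] by simp

lemma indep_sources_at_0: "indep_vars (\<lambda>_. borel) (\<lambda>s \<omega>. source s \<omega> 0) UNIV"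
  by (rule indep_vars_compose2[OF indep]) simp

lemma AE_nonneg: "AE \<omega> in M. (\<forall>i. 0 \<le> E i \<omega>) \<and> (\<forall>v k. 0 \<le> W v \<omega> k)"
proof -
  have "AE \<omega> in M. 0 \<le> E i \<omega>" for i
  proof (rule AE_distrD[OF measurable_E[unfolded measurable_lborel1[symmetric]]])
    show "AE x in distr M lborel (E i). 0 \<le> x"
      unfolding distributed_distr_eq_density[OF expo[of i]]
      by (subst AE_density) (auto simp: exponential_density_def)
  qed
  moreover have "AE \<omega> in M. \<forall>k. 0 \<le> W v \<omega> k" for v
    by (rule AE_distrD[OF measurable_W]) (simp only: law weights_nonneg)
  ultimately show ?thesis by (simp add: AE_all_countable)
qed

lemma prob_arrivals_le:
  assumes m: "1 \<le> m" and t: "0 \<le> t"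
  shows "emeasure M {\<omega>\<in>space M. (\<Sum>i<m. E i \<omega>) \<le> t} \<le> ennreal (t ^ m / fact (m - 1))"
proof -
  let ?I = "Arr ` {..<m}"
  have "distributed M lborel (\<lambda>\<omega>. \<Sum>s\<in>?I. source s \<omega> 0) (erlang_density (card ?I - 1) 1)"
    by (rule exponential_distributed_sum[OF _ _ _ _ indep_vars_subset[OF indep_sources_at_0]])
      (use m expo in \<open>auto simp: lessThan_empty_iff\<close>)
  moreover have "card ?I = m" by (simp add: card_image inj_on_def)
  moreover have "(\<lambda>\<omega>. \<Sum>s\<in>?I. source s \<omega> 0) = (\<lambda>\<omega>. \<Sum>i<m. E i \<omega>)"
    by (simp add: sum.reindex inj_on_def)
  ultimately have erlang: "distributed M lborel (\<lambda>\<omega>. \<Sum>i<m. E i \<omega>) (erlang_density (m - 1) 1)"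
    by simp
  have "{\<omega>\<in>space M. (\<Sum>i<m. E i \<omega>) \<le> t} = (\<lambda>\<omega>. \<Sum>i<m. E i \<omega>) -` {..t} \<inter> space M" by auto
  hence "emeasure M {\<omega>\<in>space M. (\<Sum>i<m. E i \<omega>) \<le> t}
      = (\<integral>\<^sup>+x. ennreal (erlang_density (m - 1) 1 x) * indicator {..t} x \<partial>lborel)"
    using distributed_emeasure[OF erlang, of "{..t}"] by simp
  also have "\<dots> \<le> (\<integral>\<^sup>+x. ennreal (t ^ (m - 1) / fact (m - 1)) * indicator {0..t} x \<partial>lborel)"
  proof (rule nn_integral_mono)
    fix x :: real
    show "ennreal (erlang_density (m - 1) 1 x) * indicator {..t} x
        \<le> ennreal (t ^ (m - 1) / fact (m - 1)) * indicator {0..t} x"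
    proof (cases "0 \<le> x \<and> x \<le> t")
      case True
      have "x ^ (m - 1) * exp (- x) \<le> t ^ (m - 1) * 1"
        by (rule mult_mono) (use True in \<open>auto intro: power_mono\<close>)
      hence "erlang_density (m - 1) 1 x \<le> t ^ (m - 1) / fact (m - 1)"
        using True by (simp add: erlang_density_def divide_right_mono)
      thus ?thesis using True by (simp add: ennreal_leI)
    qed (auto simp: erlang_density_def indicator_def)
  qed
  also have "\<dots> = ennreal (t ^ (m - 1) / fact (m - 1)) * ennreal t"
    using t by (simp add: nn_integral_cmult_indicator)
  also have "\<dots> = ennreal (t ^ (m - 1) / fact (m - 1) * t)"
    using t by (subst ennreal_mult) auto
  also have "t ^ (m - 1) / fact (m - 1) * t = t ^ m / fact (m - 1)"
    using m by (cases m) auto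
  finally show ?thesis .
qed

definition weights :: "'a \<Rightarrow> src \<Rightarrow> nat \<Rightarrow> real" where
  "weights \<omega> = restrict (\<lambda>s. source s \<omega>) (range Wt)"

lemma measurable_weights[measurable]: "weights \<in> measurable M weights_space"
  unfolding weights_def by (rule measurable_restrict) simp

lemma box_eq_weight_box:
  assumes "\<forall>v k. 0 \<le> W v \<omega> k"
  shows "box W u \<omega> = weight_box u (weights \<omega>)"
proof -
  have "Pw W v \<omega> = path_weight v (weights \<omega>)" for v
    using assms unfolding Pw_def path_weight_def weights_def by (intro prod.cong) auto
  thus ?thesis by (simp add: box_def box_left_def weight_box_def box_start_def)
qed

lemma prob_ball_in_Ico:
  assumes "a \<le> b"
  shows "prob {\<omega>\<in>space M. U i \<omega> \<in> {a..<b}} \<le> b - a"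
proof -
  have "emeasure M {\<omega>\<in>space M. U i \<omega> \<in> {a..<b}} = emeasure M (U i -` {a..<b} \<inter> space M)"
    by (auto intro!: arg_cong[where f="emeasure M"])
  also have "\<dots> = (\<integral>\<^sup>+x. (indicator {0..1::real} x :: ennreal) * indicator {a..<b} x \<partial>lborel)"
    by (rule distributed_emeasure[OF unif]) simp
  also have "\<dots> \<le> (\<integral>\<^sup>+x. indicator {a..<b} x \<partial>lborel)"
    by (intro nn_integral_mono) (auto simp: indicator_def)
  also have "\<dots> = ennreal (b - a)" using assms by simp
  finally show ?thesis using assms by (simp add: emeasure_eq_measure)
qed

lemma prob_two_balls_in_Ico:
  assumes "i \<noteq> k" "a \<le> b"
  shows "emeasure M {\<omega>\<in>space M. U i \<omega> \<in> {a..<b} \<and> U k \<omega> \<in> {a..<b}} \<le> ennreal ((b - a)^2)"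
proof -
  let ?J = "{Ball i, Ball k}"
  let ?A = "\<lambda>s. (\<lambda>\<omega>. source s \<omega> 0) -` {a..<b} \<inter> space M"
  have "prob (\<Inter>s\<in>?J. ?A s) = (\<Prod>s\<in>?J. prob (?A s))"
    by (rule indep_varsD[OF indep_sources_at_0]) auto
  moreover have "(\<Inter>s\<in>?J. ?A s) = {\<omega>\<in>space M. U i \<omega> \<in> {a..<b} \<and> U k \<omega> \<in> {a..<b}}"
    by auto
  moreover have "(\<Prod>s\<in>?J. prob (?A s))
      = prob {\<omega>\<in>space M. U i \<omega> \<in> {a..<b}} * prob {\<omega>\<in>space M. U k \<omega> \<in> {a..<b}}"
    using assms(1) by (simp add: Int_commute Collect_conj_eq vimage_def)
  ultimately have "prob {\<omega>\<in>space M. U i \<omega> \<in> {a..<b} \<and> U k \<omega> \<in> {a..<b}}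
      = prob {\<omega>\<in>space M. U i \<omega> \<in> {a..<b}} * prob {\<omega>\<in>space M. U k \<omega> \<in> {a..<b}}"
    by simp
  also have "\<dots> \<le> (b - a) * (b - a)"
    using assms(2) by (intro mult_mono prob_ball_in_Ico) auto
  finally show ?thesis using assms(2) by (simp add: emeasure_eq_measure power2_eq_square ennreal_leI)
qed

definition ball_pair :: "nat \<Rightarrow> nat \<Rightarrow> 'a \<Rightarrow> src \<Rightarrow> nat \<Rightarrow> real" where
  "ball_pair i k \<omega> = restrict (\<lambda>s. source s \<omega>) {Ball i, Ball k}"

lemma measurable_ball_pair[measurable]: "ball_pair i k \<in> measurable M (ball_pair_space i k)"
  unfolding ball_pair_def by (rule measurable_restrict) simp

lemma indep_weights_ball_pair: "indep_var weights_space weights (ball_pair_space i k) (ball_pair i k)"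
  unfolding weights_def ball_pair_def by (rule indep_var_restrict[OF indep]) auto

lemma prob_ball_pair_in_weight_box:
  assumes "i \<noteq> k"
  shows "emeasure (distr M (ball_pair_space i k) (ball_pair i k)) {z \<in> space (ball_pair_space i k).
      z (Ball i) 0 \<in> weight_box u y \<and> z (Ball k) 0 \<in> weight_box u y} \<le> ennreal (path_weight u y ^ 2)"
proof -
  let ?S = "{z \<in> space (ball_pair_space i k). z (Ball i) 0 \<in> weight_box u y \<and> z (Ball k) 0 \<in> weight_box u y}"
  have "?S \<in> sets (ball_pair_space i k)" unfolding weight_box_def atLeastLessThan_iff by measurable
  hence "emeasure (distr M (ball_pair_space i k) (ball_pair i k)) ?S
      = emeasure M (ball_pair i k -` ?S \<inter> space M)"
    by (simp add: emeasure_distr)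
  also have "ball_pair i k -` ?S \<inter> space M
      = {\<omega>\<in>space M. U i \<omega> \<in> weight_box u y \<and> U k \<omega> \<in> weight_box u y}"
    using measurable_space[OF measurable_ball_pair] by (auto simp: ball_pair_def)
  also have "emeasure M \<dots> \<le> ennreal ((box_start u y + path_weight u y - box_start u y) ^ 2)"
    unfolding weight_box_def by (rule prob_two_balls_in_Ico[OF assms]) (simp add: path_weight_nonneg)
  finally show ?thesis by simp
qed

lemma prob_two_balls_in_light_box:
  assumes "i \<noteq> k"
  shows "emeasure M {\<omega>\<in>space M. path_weight u (weights \<omega>) \<le> c \<and>
      U i \<omega> \<in> weight_box u (weights \<omega>) \<and> U k \<omega> \<in> weight_box u (weights \<omega>)}
    \<le> (\<integral>\<^sup>+\<omega>. ennreal (path_weight u (weights \<omega>) ^ 2) * indicator {\<omega>. path_weight u (weights \<omega>) \<le> c} \<omega> \<partial>M)"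
proof -
  define T where "T = {p \<in> space (weights_space \<Otimes>\<^sub>M ball_pair_space i k). path_weight u (fst p) \<le> c \<and>
      snd p (Ball i) 0 \<in> weight_box u (fst p) \<and> snd p (Ball k) 0 \<in> weight_box u (fst p)}"
  have T: "T \<in> sets (weights_space \<Otimes>\<^sub>M ball_pair_space i k)"
    unfolding T_def weight_box_def atLeastLessThan_iff by measurable
  have "{\<omega>\<in>space M. path_weight u (weights \<omega>) \<le> c \<and>
      U i \<omega> \<in> weight_box u (weights \<omega>) \<and> U k \<omega> \<in> weight_box u (weights \<omega>)}
      = {\<omega>\<in>space M. (weights \<omega>, ball_pair i k \<omega>) \<in> T}"
    using measurable_space[OF measurable_weights] measurable_space[OF measurable_ball_pair]
    by (auto simp: T_def space_pair_measure ball_pair_def)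
  hence "emeasure M {\<omega>\<in>space M. path_weight u (weights \<omega>) \<le> c \<and>
      U i \<omega> \<in> weight_box u (weights \<omega>) \<and> U k \<omega> \<in> weight_box u (weights \<omega>)}
      = (\<integral>\<^sup>+y. emeasure (distr M (ball_pair_space i k) (ball_pair i k)) (Pair y -` T)
      \<partial>distr M weights_space weights)"
    by (simp only: emeasure_indep_var_pair[OF indep_weights_ball_pair T])
  also have "\<dots> \<le> (\<integral>\<^sup>+y. ennreal (path_weight u y ^ 2) * indicator {y. path_weight u y \<le> c} y
      \<partial>distr M weights_space weights)"
  proof (rule nn_integral_mono)
    fix y assume y: "y \<in> space (distr M weights_space weights)"
    show "emeasure (distr M (ball_pair_space i k) (ball_pair i k)) (Pair y -` T)
      \<le> ennreal (path_weight u y ^ 2) * indicator {y. path_weight u y \<le> c} y"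
    proof (cases "path_weight u y \<le> c")
      case True
      hence "Pair y -` T = {z \<in> space (ball_pair_space i k).
          z (Ball i) 0 \<in> weight_box u y \<and> z (Ball k) 0 \<in> weight_box u y}"
        using y by (auto simp: T_def space_pair_measure)
      thus ?thesis using True prob_ball_pair_in_weight_box[OF assms] by simp
    qed (auto simp: T_def)
  qed
  also have "\<dots> = (\<integral>\<^sup>+\<omega>. ennreal (path_weight u (weights \<omega>) ^ 2) *
      indicator {\<omega>. path_weight u (weights \<omega>) \<le> c} \<omega> \<partial>M)"
    by (subst nn_integral_distr) (simp_all add: indicator_def)
  finally show ?thesis .
qed

definition weight_moment :: "real \<Rightarrow> nat \<Rightarrow> ennreal" where
  "weight_moment \<theta> k = (\<integral>\<^sup>+x. ennreal (max 0 (x k) powr \<theta>) \<partial>Q)"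

lemma Lsum_eq_nn_integral_weight_moment:
  "Lsum Q \<theta> = (\<integral>\<^sup>+k. weight_moment \<theta> k \<partial>count_space UNIV)"
proof -
  have "Lsum Q \<theta> = (\<integral>\<^sup>+x. (\<Sum>k. ennreal (max 0 (x k) powr \<theta>)) \<partial>Q)"
    unfolding Lsum_def by (intro nn_integral_cong suminf_cong) (auto simp: max_def)
  also have "\<dots> = (\<Sum>k. weight_moment \<theta> k)"
    unfolding weight_moment_def using law[of "[]"] by (intro nn_integral_suminf) auto
  also have "\<dots> = (\<integral>\<^sup>+k. weight_moment \<theta> k \<partial>count_space UNIV)"
    by (rule nn_integral_count_space_nat[symmetric])
  finally show ?thesis .
qed

text \<open>The weights along the path to u sit at the distinct nodes take i u and are independent.\<close>

lemma nn_integral_path_weight_powr: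
  "(\<integral>\<^sup>+\<omega>. ennreal (path_weight u (weights \<omega>) powr \<theta>) \<partial>M) = (\<Prod>i<length u. weight_moment \<theta> (u ! i))"
proof -
  define depth where "depth s = (case s of Wt v \<Rightarrow> length v | _ \<Rightarrow> 0)" for s
  define g where "g s x = ennreal (max 0 (x (u ! depth s)) powr \<theta>)" for s and x :: "nat \<Rightarrow> real"
  let ?I = "(\<lambda>i. Wt (take i u)) ` {..<length u}"
  have inj: "inj_on (\<lambda>i. Wt (take i u)) {..<length u}"
    by (auto simp: inj_on_def dest: arg_cong[where f=length])
  have g_path: "g (Wt (take i u)) = (\<lambda>x. ennreal (max 0 (x (u ! i)) powr \<theta>))" if "i < length u" for i
    using that by (simp add: g_def depth_def fun_eq_iff)
  have "(\<Prod>s\<in>?I. g s (source s \<omega>)) = ennreal (path_weight u (weights \<omega>) powr \<theta>)" for \<omega>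
  proof -
    have "(\<Prod>s\<in>?I. g s (source s \<omega>)) = (\<Prod>i<length u. ennreal (max 0 (W (take i u) \<omega> (u ! i)) powr \<theta>))"
      by (simp add: prod.reindex[OF inj] g_path)
    also have "\<dots> = ennreal (path_weight u (weights \<omega>) powr \<theta>)"
      by (simp add: prod_ennreal path_weight_def weights_def prod_powr_distrib)
    finally show ?thesis .
  qed
  moreover have "(\<integral>\<^sup>+\<omega>. (\<Prod>s\<in>?I. g s (source s \<omega>)) \<partial>M) = (\<Prod>s\<in>?I. \<integral>\<^sup>+\<omega>. g s (source s \<omega>) \<partial>M)"
    by (rule indep_vars_nn_integral[OF _ indep_vars_subset[OF indep_vars_compose2[OF indep]]])
      (auto simp: g_def)
  moreover have "(\<integral>\<^sup>+\<omega>. g s (source s \<omega>) \<partial>M) = weight_moment \<theta> (u ! i)"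
    if "i < length u" "s = Wt (take i u)" for i s
  proof -
    have "weight_moment \<theta> (u ! i) = (\<integral>\<^sup>+x. g s x \<partial>distr M seq_borel (W (take i u)))"
      unfolding weight_moment_def law using that g_path by simp
    thus ?thesis using that by (subst (asm) nn_integral_distr) (auto simp: g_def[abs_def])
  qed
  ultimately show ?thesis by (simp add: prod.reindex[OF inj])
qed

lemma nn_integral_sum_path_weight_powr:
  "(\<integral>\<^sup>+u. (\<integral>\<^sup>+\<omega>. ennreal (path_weight u (weights \<omega>) powr \<theta>) \<partial>M) \<partial>count_space {u. length u = j})
    = Lsum Q \<theta> ^ j"
  by (simp add: nn_integral_path_weight_powr nn_integral_count_space_lists_prod
      Lsum_eq_nn_integral_weight_moment cong: nn_integral_cong_simp)

lemma measurable_path_weight_weights[measurable]: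
  "(\<lambda>\<omega>. path_weight u (weights \<omega>)) \<in> borel_measurable M"
  by (rule measurable_compose[OF measurable_weights measurable_path_weight])

lemma measurable_box_start_weights[measurable]:
  "(\<lambda>\<omega>. box_start u (weights \<omega>)) \<in> borel_measurable M"
  by (rule measurable_compose[OF measurable_weights measurable_box_start])

definition light_box_collision :: "nat \<Rightarrow> nat list \<Rightarrow> nat \<times> nat \<Rightarrow> 'a set" where
  "light_box_collision m u p = {\<omega>\<in>space M. path_weight u (weights \<omega>) \<le> 1 / real m \<and>
     U (fst p) \<omega> \<in> weight_box u (weights \<omega>) \<and> U (snd p) \<omega> \<in> weight_box u (weights \<omega>)}"

definition distinct_pairs :: "nat \<Rightarrow> (nat \<times> nat) set" where
  "distinct_pairs m = {p. fst p \<in> {1..m} \<and> snd p \<in> {1..m} \<and> fst p \<noteq> snd p}"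

definition collision_event :: "nat \<Rightarrow> nat list \<Rightarrow> 'a set" where
  "collision_event m u = {\<omega>\<in>space M. 1 / real m < path_weight u (weights \<omega>)} \<union>
     (\<Union>p\<in>distinct_pairs m. light_box_collision m u p)"

lemma finite_distinct_pairs: "finite (distinct_pairs m)"
  by (rule finite_subset[of _ "{1..m} \<times> {1..m}"]) (auto simp: distinct_pairs_def)

lemma card_distinct_pairs_le: "card (distinct_pairs m) \<le> m * m"
proof -
  have "card (distinct_pairs m) \<le> card ({1..m} \<times> {1..m})"
    by (rule card_mono) (auto simp: distinct_pairs_def)
  thus ?thesis by (simp add: card_cartesian_product)
qed

lemma sets_light_box_collision[measurable]: "light_box_collision m u p \<in> sets M"
  unfolding light_box_collision_def weight_box_def atLeastLessThan_iff by measurable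

lemma sets_collision_event[measurable]: "collision_event m u \<in> sets M"
  unfolding collision_event_def using finite_distinct_pairs by measurable

lemma prob_heavy_box:
  assumes m: "1 \<le> m" and \<theta>: "0 < \<theta>"
  shows "emeasure M {\<omega>\<in>space M. 1 / real m < path_weight u (weights \<omega>)}
    \<le> ennreal (real m powr \<theta>) * (\<integral>\<^sup>+\<omega>. ennreal (path_weight u (weights \<omega>) powr \<theta>) \<partial>M)"
proof -
  have "emeasure M {\<omega>\<in>space M. 1 / real m < path_weight u (weights \<omega>)}
      = (\<integral>\<^sup>+\<omega>. indicator {\<omega>\<in>space M. 1 / real m < path_weight u (weights \<omega>)} \<omega> \<partial>M)"
    by (rule nn_integral_indicator[symmetric]) measurable
  also have "\<dots> \<le> (\<integral>\<^sup>+\<omega>. ennreal (real m powr \<theta>) * ennreal (path_weight u (weights \<omega>) powr \<theta>) \<partial>M)"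
  proof (rule nn_integral_mono)
    fix \<omega>
    let ?p = "path_weight u (weights \<omega>)"
    show "indicator {\<omega>\<in>space M. 1 / real m < path_weight u (weights \<omega>)} \<omega>
        \<le> ennreal (real m powr \<theta>) * ennreal (?p powr \<theta>)"
    proof (cases "1 / real m < ?p")
      case True
      hence "1 \<le> real m * ?p" using m by (simp add: field_simps)
      hence "1 \<le> (real m * ?p) powr \<theta>" using \<theta> by (intro ge_one_powr_ge_zero) auto
      also have "\<dots> = real m powr \<theta> * ?p powr \<theta>"
        using path_weight_nonneg by (simp add: powr_mult)
      finally have "ennreal 1 \<le> ennreal (real m powr \<theta> * ?p powr \<theta>)" by (rule ennreal_leI)
      thus ?thesis using True by (simp add: indicator_def ennreal_mult)
    qed (simp add: indicator_def)
  qed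
  also have "\<dots> = ennreal (real m powr \<theta>) * (\<integral>\<^sup>+\<omega>. ennreal (path_weight u (weights \<omega>) powr \<theta>) \<partial>M)"
    by (rule nn_integral_cmult) simp
  finally show ?thesis .
qed

lemma prob_light_box_collisions:
  assumes m: "1 \<le> m" and \<theta>: "0 < \<theta>" "\<theta> \<le> 2"
  shows "emeasure M (\<Union>p\<in>distinct_pairs m. light_box_collision m u p)
    \<le> ennreal (real m powr \<theta>) * (\<integral>\<^sup>+\<omega>. ennreal (path_weight u (weights \<omega>) powr \<theta>) \<partial>M)"
proof -
  let ?light = "\<lambda>\<omega>. ennreal (path_weight u (weights \<omega>) ^ 2) *
    indicator {\<omega>. path_weight u (weights \<omega>) \<le> 1 / real m} \<omega>"
  have "emeasure M (\<Union>p\<in>distinct_pairs m. light_box_collision m u p)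
      \<le> (\<Sum>p\<in>distinct_pairs m. emeasure M (light_box_collision m u p))"
    by (rule emeasure_subadditive_finite[OF finite_distinct_pairs]) auto
  also have "\<dots> \<le> (\<Sum>p\<in>distinct_pairs m. (\<integral>\<^sup>+\<omega>. ?light \<omega> \<partial>M))"
    unfolding light_box_collision_def
    by (intro sum_mono prob_two_balls_in_light_box) (auto simp: distinct_pairs_def)
  also have "\<dots> = of_nat (card (distinct_pairs m)) * (\<integral>\<^sup>+\<omega>. ?light \<omega> \<partial>M)"
    by simp
  also have "\<dots> \<le> ennreal (real m * real m) * (\<integral>\<^sup>+\<omega>. ?light \<omega> \<partial>M)"
  proof (rule mult_right_mono)
    have "real (card (distinct_pairs m)) \<le> real m * real m"
      using card_distinct_pairs_le by (simp only: of_nat_mult[symmetric] of_nat_le_iff)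
    thus "of_nat (card (distinct_pairs m)) \<le> ennreal (real m * real m)"
      unfolding ennreal_of_nat_eq_real_of_nat by (rule ennreal_leI)
  qed simp
  also have "\<dots> = (\<integral>\<^sup>+\<omega>. ennreal (real m * real m) * ?light \<omega> \<partial>M)"
    by (rule nn_integral_cmult[symmetric]) measurable
  also have "\<dots> \<le> (\<integral>\<^sup>+\<omega>. ennreal (real m powr \<theta>) * ennreal (path_weight u (weights \<omega>) powr \<theta>) \<partial>M)"
  proof (rule nn_integral_mono)
    fix \<omega>
    let ?p = "path_weight u (weights \<omega>)"
    show "ennreal (real m * real m) * ?light \<omega> \<le> ennreal (real m powr \<theta>) * ennreal (?p powr \<theta>)"
    proof (cases "?p \<le> 1 / real m")
      case True
      have "real m * real m * ?p ^ 2 \<le> real m powr \<theta> * ?p powr \<theta>"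
        using True m \<theta> path_weight_nonneg by (intro mult_square_le_powr) auto
      hence "ennreal (real m * real m * ?p ^ 2) \<le> ennreal (real m powr \<theta> * ?p powr \<theta>)"
        by (rule ennreal_leI)
      thus ?thesis using True path_weight_nonneg by (simp add: indicator_def ennreal_mult mult.assoc)
    qed (simp add: indicator_def)
  qed
  also have "\<dots> = ennreal (real m powr \<theta>) * (\<integral>\<^sup>+\<omega>. ennreal (path_weight u (weights \<omega>) powr \<theta>) \<partial>M)"
    by (rule nn_integral_cmult) simp
  finally show ?thesis .
qed

lemma prob_collision_event:
  assumes "1 \<le> m" "0 < \<theta>" "\<theta> \<le> 2"
  shows "emeasure M (collision_event m u)
    \<le> 2 * ennreal (real m powr \<theta>) * (\<integral>\<^sup>+\<omega>. ennreal (path_weight u (weights \<omega>) powr \<theta>) \<partial>M)"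
proof -
  have "emeasure M (collision_event m u) \<le> emeasure M {\<omega>\<in>space M. 1 / real m < path_weight u (weights \<omega>)}
      + emeasure M (\<Union>p\<in>distinct_pairs m. light_box_collision m u p)"
    unfolding collision_event_def using finite_distinct_pairs
    by (intro emeasure_subadditive) measurable
  also have "\<dots> \<le> 2 * ennreal (real m powr \<theta>) * (\<integral>\<^sup>+\<omega>. ennreal (path_weight u (weights \<omega>) powr \<theta>) \<partial>M)"
    unfolding mult_2 distrib_right using assms
    by (intro add_mono prob_heavy_box prob_light_box_collisions) auto
  finally show ?thesis .
qed

definition bad_event :: "nat \<Rightarrow> real \<Rightarrow> nat \<Rightarrow> 'a set" where
  "bad_event m t j = {\<omega>\<in>space M. (\<Sum>i<m. E i \<omega>) \<le> t} \<union> (\<Union>u\<in>{u. length u = j}. collision_event m u)"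

lemma sets_bad_event[measurable]: "bad_event m t j \<in> sets M"
  unfolding bad_event_def by (intro sets.Un sets.countable_UN'') auto

lemma prob_bad_event:
  assumes m: "1 \<le> m" and t: "0 \<le> t" and \<theta>: "0 < \<theta>" "\<theta> \<le> 2"
  shows "emeasure M (bad_event m t j)
    \<le> ennreal (t ^ m / fact (m - 1)) + 2 * ennreal (real m powr \<theta>) * Lsum Q \<theta> ^ j"
proof -
  have "emeasure M (\<Union>u\<in>{u. length u = j}. collision_event m u)
      \<le> (\<integral>\<^sup>+u. emeasure M (collision_event m u) \<partial>count_space {u. length u = j})"
    by (rule emeasure_UN_le_nn_integral_count_space) auto
  also have "\<dots> \<le> (\<integral>\<^sup>+u. 2 * ennreal (real m powr \<theta>) * (\<integral>\<^sup>+\<omega>. ennreal (path_weight u (weights \<omega>) powr \<theta>) \<partial>M)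
      \<partial>count_space {u. length u = j})"
    by (intro nn_integral_mono prob_collision_event m \<theta>)
  also have "\<dots> = 2 * ennreal (real m powr \<theta>) * Lsum Q \<theta> ^ j"
    by (simp add: nn_integral_cmult nn_integral_sum_path_weight_powr)
  finally have collisions: "emeasure M (\<Union>u\<in>{u. length u = j}. collision_event m u)
      \<le> 2 * ennreal (real m powr \<theta>) * Lsum Q \<theta> ^ j" .
  have "emeasure M (bad_event m t j) \<le> emeasure M {\<omega>\<in>space M. (\<Sum>i<m. E i \<omega>) \<le> t}
      + emeasure M (\<Union>u\<in>{u. length u = j}. collision_event m u)"
    unfolding bad_event_def by (intro emeasure_subadditive sets.countable_UN'') auto
  also have "\<dots> \<le> ennreal (t ^ m / fact (m - 1)) + 2 * ennreal (real m powr \<theta>) * Lsum Q \<theta> ^ j"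
    by (intro add_mono prob_arrivals_le m t collisions)
  finally show ?thesis .
qed

lemma Kpois_nonzero_imp_bad_event:
  assumes \<omega>: "\<omega> \<in> space M" and E: "\<forall>i. 0 \<le> E i \<omega>" and W: "\<forall>v k. 0 \<le> W v \<omega> k"
    and m: "1 \<le> m" and K: "Kpois W U E j t 2 \<omega> \<noteq> 0"
  shows "\<omega> \<in> bad_event m t j"
proof -
  from Kpois_two_nonzero_cases[OF _ m K] E
  consider "(\<Sum>i<m. E i \<omega>) \<le> t"
    | u i k where "length u = j" "i \<in> {1..m-1}" "k \<in> {1..m-1}" "i \<noteq> k"
        "U i \<omega> \<in> box W u \<omega>" "U k \<omega> \<in> box W u \<omega>"
    by blast
  thus ?thesis
  proof cases
    case 1
    thus ?thesis using \<omega> by (simp add: bad_event_def)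
  next
    case (2 u i k)
    have "\<omega> \<in> light_box_collision m u (i, k)" if "\<not> 1 / real m < path_weight u (weights \<omega>)"
      using that \<omega> 2 box_eq_weight_box[OF W] by (simp add: light_box_collision_def)
    moreover have "(i, k) \<in> distinct_pairs m" using 2 by (auto simp: distinct_pairs_def)
    ultimately have "\<omega> \<in> collision_event m u" using \<omega> by (auto simp: collision_event_def)
    thus ?thesis using 2 by (auto simp: bad_event_def)
  qed
qed

lemma AE_Kpois_tendsto_zero_of_summable:
  fixes t :: "nat \<Rightarrow> real"
  assumes D: "\<And>j. D j \<in> sets M" and summable: "summable (\<lambda>j. measure M (D j))"
    and cover: "\<And>j \<omega>. \<omega> \<in> space M \<Longrightarrow> \<forall>i. 0 \<le> E i \<omega> \<Longrightarrow> \<forall>v k. 0 \<le> W v \<omega> k \<Longrightarrow>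
       Kpois W U E j (t j) 2 \<omega> \<noteq> 0 \<Longrightarrow> \<omega> \<in> D j"
  shows "AE \<omega> in M. (\<lambda>j. real (Kpois W U E j (t j) 2 \<omega>)) \<longlonglongrightarrow> 0"
proof -
  have "AE \<omega> in M. eventually (\<lambda>j. \<omega> \<in> space M - D j) sequentially"
    by (rule borel_cantelli_AE1[OF D _ summable]) (simp add: less_top[symmetric])
  with AE_nonneg AE_space show ?thesis
  proof eventually_elim
    case (elim \<omega>)
    from elim(3) have "eventually (\<lambda>j. real (Kpois W U E j (t j) 2 \<omega>) = 0) sequentially"
      by (rule eventually_mono) (use cover elim(1,2) in fastforce)
    thus ?case by (rule tendsto_eventually)
  qed
qed

lemma Kpois_two_tendsto_zero_if_nonpos:
  assumes a: "a \<le> 0" and \<epsilon>: "0 < \<epsilon>"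
  shows "AE \<omega> in M. (\<lambda>j. real (Kpois W U E j (exp (a * real j - \<epsilon> * sqrt (real j))) 2 \<omega>)) \<longlonglongrightarrow> 0"
proof -
  define t where "t j = exp (a * real j - \<epsilon> * sqrt (real j))" for j :: nat
  define D where "D j = {\<omega>\<in>space M. (\<Sum>i<2. E i \<omega>) \<le> t j}" for j
  have "AE \<omega> in M. (\<lambda>j. real (Kpois W U E j (t j) 2 \<omega>)) \<longlonglongrightarrow> 0"
  proof (rule AE_Kpois_tendsto_zero_of_summable)
    show "D j \<in> sets M" for j unfolding D_def by measurable
    show "\<omega> \<in> D j" if "\<omega> \<in> space M" "\<forall>i. 0 \<le> E i \<omega>" "Kpois W U E j (t j) 2 \<omega> \<noteq> 0" for j \<omega>
      using Kpois_two_nonzero_cases[of E \<omega> 2 W U j "t j"] that by (auto simp: D_def)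
    show "summable (\<lambda>j. measure M (D j))"
    proof (rule summable_comparison_test)
      show "summable (\<lambda>j::nat. exp (- (2 * \<epsilon>) * sqrt (real j)))"
        by (rule summable_exp_neg_sqrt) (use \<epsilon> in simp)
      show "\<exists>N. \<forall>j\<ge>N. norm (measure M (D j)) \<le> exp (- (2 * \<epsilon>) * sqrt (real j))"
      proof (intro exI allI impI)
        fix j :: nat
        have "emeasure M (D j) \<le> ennreal (t j ^ 2 / fact (2 - 1))"
          unfolding D_def by (rule prob_arrivals_le) (auto simp: t_def)
        hence "measure M (D j) \<le> exp (2 * (a * real j - \<epsilon> * sqrt (real j)))"
          by (simp add: emeasure_eq_measure t_def exp_add[symmetric] power2_eq_square)
        also have "\<dots> \<le> exp (- (2 * \<epsilon>) * sqrt (real j))"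
          using a by (simp add: mult_nonpos_nonneg algebra_simps)
        finally show "norm (measure M (D j)) \<le> exp (- (2 * \<epsilon>) * sqrt (real j))" by simp
      qed
    qed
  qed
  thus ?thesis by (simp add: t_def)
qed

lemma Kpois_two_tendsto_zero_if_pos:
  assumes \<theta>: "0 < \<theta>" "\<theta> \<le> 2" and \<epsilon>: "0 < \<epsilon>" and a: "0 < a" and lam: "lam Q \<theta> = - a * \<theta>"
  shows "AE \<omega> in M. (\<lambda>j. real (Kpois W U E j (exp (a * real j - \<epsilon> * sqrt (real j))) 2 \<omega>)) \<longlonglongrightarrow> 0"
proof -
  define t where "t j = exp (a * real j - \<epsilon> * sqrt (real j))" for j :: nat
  define m where "m j = nat \<lceil>exp 2 * t j\<rceil> + j + 2" for j
  define b where "b j = t j ^ m j / fact (m j - 1) + 2 * (real (m j) powr \<theta> * exp (- a * \<theta>) ^ j)"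
    for j
  have t_pos: "0 < t j" for j by (simp add: t_def)
  have Lsum_eq: "Lsum Q \<theta> = ennreal (exp (- a * \<theta>))"
    using Lsum_eq_exp_lam[of Q \<theta>] lam a \<theta> by simp
  have prob_bad_event_le: "measure M (bad_event (m j) (t j) j) \<le> b j" for j
  proof -
    have "emeasure M (bad_event (m j) (t j) j)
        \<le> ennreal (t j ^ m j / fact (m j - 1)) + 2 * ennreal (real (m j) powr \<theta>) * Lsum Q \<theta> ^ j"
      using t_pos[of j] \<theta> by (intro prob_bad_event) (auto simp: less_imp_le m_def)
    also have "\<dots> = ennreal (t j ^ m j / fact (m j - 1)) + ennreal (2 * real (m j) powr \<theta> * exp (- a * \<theta>) ^ j)"
      unfolding Lsum_eq by (simp add: ennreal_mult ennreal_power)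
    also have "\<dots> = ennreal (b j)"
      unfolding b_def mult.assoc by (rule ennreal_plus[symmetric]) (use t_pos[of j] in auto)
    finally have "emeasure M (bad_event (m j) (t j) j) \<le> ennreal (b j)" .
    moreover have "0 \<le> b j" unfolding b_def using t_pos[of j] by simp
    ultimately show ?thesis by (simp add: emeasure_eq_measure)
  qed
  have "AE \<omega> in M. (\<lambda>j. real (Kpois W U E j (t j) 2 \<omega>)) \<longlonglongrightarrow> 0"
  proof (rule AE_Kpois_tendsto_zero_of_summable)
    show "bad_event (m j) (t j) j \<in> sets M" for j by measurable
    show "\<omega> \<in> bad_event (m j) (t j) j"
      if "\<omega> \<in> space M" "\<forall>i. 0 \<le> E i \<omega>" "\<forall>v k. 0 \<le> W v \<omega> k" "Kpois W U E j (t j) 2 \<omega> \<noteq> 0"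
      for j \<omega>
      using that by (intro Kpois_nonzero_imp_bad_event) (auto simp: m_def)
    have "summable b"
      unfolding b_def m_def t_def by (rule summable_collision_bound[OF a \<epsilon> \<theta>(1)])
    thus "summable (\<lambda>j. measure M (bad_event (m j) (t j) j))"
      by (rule summable_comparison_test[rotated]) (use prob_bad_event_le in auto)
  qed
  thus ?thesis by (simp add: t_def)
qed

lemma Kpois_two_tendsto_zero:
  assumes \<theta>: "0 < \<theta>" "\<theta> \<le> 2" and \<epsilon>: "0 < \<epsilon>"
  shows "AE \<omega> in M. (\<lambda>j. real (Kpois W U E j
    (exp (- lam Q \<theta> / \<theta> * real j - \<epsilon> * sqrt (real j))) 2 \<omega>)) \<longlonglongrightarrow> 0"
proof (cases "- lam Q \<theta> / \<theta> \<le> 0")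
  case True
  thus ?thesis using \<epsilon> by (rule Kpois_two_tendsto_zero_if_nonpos)
next
  case False
  moreover have "lam Q \<theta> = - (- lam Q \<theta> / \<theta>) * \<theta>" using \<theta> by simp
  ultimately show ?thesis by (intro Kpois_two_tendsto_zero_if_pos[OF \<theta> \<epsilon>]) auto
qed

end

theorem lemma2:
  fixes M :: "'a measure"
    and Q :: "(nat \<Rightarrow> real) measure"
    and W :: "nat list \<Rightarrow> 'a \<Rightarrow> nat \<Rightarrow> real"
    and U :: "nat \<Rightarrow> 'a \<Rightarrow> real"
    and E :: "nat \<Rightarrow> 'a \<Rightarrow> real"
    and \<theta>s d \<epsilon> :: real
  assumes "prob_space M"
    and indep: "prob_space.indep_vars M (\<lambda>_. PiM UNIV (\<lambda>_. borel)) (src_var W U E) UNIV"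
    and law: "\<And>u. distr M (PiM UNIV (\<lambda>_. borel)) (W u) = Q"
    and nonneg_sum1: "AE x in Q. (\<forall>k. 0 \<le> x k) \<and> (\<lambda>k. x k) sums 1"
    and supercrit: "(\<integral>\<^sup>+ x. emeasure (count_space UNIV) {k. 0 < x k} \<partial>Q) > 1"
    and nonlattice: "\<And>a b. 0 < a \<Longrightarrow>
           measure Q {x. \<forall>k. 0 < x k \<longrightarrow> (\<exists>z::int. - ln (x k) = a * of_int z + b)} < 1"
    and unif: "\<And>i. distributed M lborel (U i) (\<lambda>x. indicator {0..1::real} x)"
    and expo: "\<And>i. distributed M lborel (E i) (exponential_density 1)"
    and \<theta>s_pos: "0 < \<theta>s"
    and \<theta>s_dom: "\<forall>\<^sub>F \<theta> in nhds \<theta>s. Lsum Q \<theta> < \<infinity>"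
    and \<theta>s_deriv: "(lam Q has_real_derivative d) (at \<theta>s)"
    and \<theta>s_eq: "\<theta>s * d - lam Q \<theta>s = 0"
    and \<epsilon>_pos: "0 < \<epsilon>"
  shows "AE \<omega> in M.
           (\<lambda>j. real (Kpois W U E j
               (exp ((if \<theta>s > 2 then - lam Q 2 / 2 else - lam Q \<theta>s / \<theta>s) * real j
                     - \<epsilon> * sqrt (real j))) 2 \<omega>)) \<longlonglongrightarrow> 0"
proof -
  have "AE x in Q. \<forall>k. 0 \<le> x k" using nonneg_sum1 by eventually_elim auto
  then interpret balls_in_boxes M Q W U E
    using assms(1) indep law unif expo by (intro balls_in_boxes.intro balls_in_boxes_axioms.intro)
  define \<theta> where "\<theta> = min \<theta>s 2"
  have "0 < \<theta>" "\<theta> \<le> 2" using \<theta>s_pos by (auto simp: \<theta>_def)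
  moreover have "(if \<theta>s > 2 then - lam Q 2 / 2 else - lam Q \<theta>s / \<theta>s) = - lam Q \<theta> / \<theta>"
    by (simp add: \<theta>_def min_def)
  ultimately show ?thesis using Kpois_two_tendsto_zero[OF _ _ \<epsilon>_pos] by simp
qed

end
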